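(* Let $d\ge1$ and let $\mu:\mathbb{R}^d\to(0,\infty)$ be a differentiable function localized to the unit ball such that $\sum_{a\in\mathbb{Z}^d}\mu(x-a)=1$ for all $x$ and $\mu(x)\ge c(1+|x|)^{-10d}$ for some $c>0$. Then there exists $C>0$ such that for every $A\subset\mathbb{Z}^d$ and every $1\le j\le d$, \[ |\partial_j\mu_A|\le C\,\mu_{\partial A}\quad\text{pointwise on }\mathbb{R}^d. \]
   Context: A bounded function $f$ on $\mathbb{R}^d$ is localized to the unit ball if there is a constant $C$ with $|f(x)|\le C$, $|f(x)|\le C|x|^{-10d}$ and $|\nabla f(x)|\le C|x|^{-10d-1}$. $H=\{h\in\mathbb{Z}^d:\max_i|h_i|\le1\}$, $A+H=\{a+h:a\in A,h\in H\}$, $\partial A=(A+H)\setminus A$. $\mu_a(x)=\mu(x-a)$ and $\mu_B=\sum_{b\in B}\mu_b$ for $B\subset\mathbb{Z}^d$. *)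

theory Defs
  imports "HOL-Analysis.Analysis"
begin

definition lattice :: "(real^'n) set" where
  "lattice = {a. \<forall>i. a $ i \<in> \<int>}"

definition Hcube :: "(real^'n) set" where
  "Hcube = {h \<in> lattice. \<forall>i. \<bar>h $ i\<bar> \<le> 1}"

definition plusH :: "(real^'n) set \<Rightarrow> (real^'n) set" where
  "plusH A = {a + h | a h. a \<in> A \<and> h \<in> Hcube}"

definition lbdry :: "(real^'n) set \<Rightarrow> (real^'n) set" where
  "lbdry A = plusH A - A"

definition muset :: "(real^'n \<Rightarrow> real) \<Rightarrow> (real^'n) set \<Rightarrow> real^'n \<Rightarrow> real" where
  "muset \<mu> B x = (\<Sum>\<^sub>\<infinity>b\<in>B. \<mu> (x - b))"

text \<open>Localized to the unit ball (for a differentiable f; the gradient norm is the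
operator norm of the Frechet derivative).\<close>
definition localized :: "(real^'n \<Rightarrow> real) \<Rightarrow> bool" where
  "localized f \<longleftrightarrow> (\<exists>C. \<forall>x.
      \<bar>f x\<bar> \<le> C \<and>
      (x \<noteq> 0 \<longrightarrow> \<bar>f x\<bar> \<le> C * norm x powr (- 10 * real CARD('n))) \<and>
      (x \<noteq> 0 \<longrightarrow> onorm (frechet_derivative f (at x)) \<le> C * norm x powr (- 10 * real CARD('n) - 1)))"

end

theory Submission
  imports Defs
begin

text \<open>
  Differentiating termwise, \<open>\<partial>\<^sub>j \<mu>\<^sub>A (x)\<close> is the sum of \<open>\<partial>\<^sub>j \<mu> (x - a)\<close> over \<open>a \<in> A\<close>; since the
  translates of \<open>\<mu>\<close> sum to 1, it is also minus the sum over the complement of \<open>A\<close>, so we may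
  sum over whichever of the two sets avoids the lattice point \<open>p\<close> nearest to \<open>x\<close>. The partials of
  \<open>\<mu>\<close> decay like \<open>(1 + |z|)^-N\<close> with \<open>N = 10d + 1\<close> (near the origin this again follows from the
  partition of unity). The discrete sup-norm ray from \<open>p\<close> to a point \<open>a\<close> of the chosen set
  crosses \<open>\<partial>A\<close>; charging \<open>a\<close> to the crossing point \<open>e\<close>, and counting the points at each
  sup-distance from \<open>p\<close> whose rays pass through \<open>e\<close>, bounds the sum of \<open>(1 + |a - p|)^-N\<close> by
  \<open>2\<cdot>4^d\<close> times the sum of \<open>(1 + |e - p|)^-(N-1)\<close> over \<open>e \<in> \<partial>A\<close>. The lower bound on \<open>\<mu>\<close>
  turns the latter into a multiple of \<open>\<mu>\<^sub>\<partial>\<^sub>A (x)\<close>.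
\<close>

section \<open>Sup norm and the integer lattice\<close>

lemma infnorm_cart_attained: "\<exists>k. \<bar>x$k\<bar> = infnorm (x::real^'n)"
proof -
  let ?f = "\<lambda>k. \<bar>x$k\<bar>"
  have "Max (range ?f) \<in> range ?f" by (rule Max_in) auto
  then obtain k where "Max (range ?f) = ?f k" by blast
  moreover have "infnorm x = Max (range ?f)"
    unfolding infnorm_cart by (simp add: cSup_eq_Max full_SetCompr_eq)
  ultimately show ?thesis by metis
qed

lemma infnorm_cart_le: "(\<And>k. \<bar>x$k\<bar> \<le> b) \<Longrightarrow> infnorm (x::real^'n) \<le> b"
  using infnorm_cart_attained[of x] by metis

lemma lattice_add: "a \<in> lattice \<Longrightarrow> b \<in> lattice \<Longrightarrow> a + b \<in> lattice"
  unfolding lattice_def by auto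

lemma lattice_diff: "a \<in> lattice \<Longrightarrow> b \<in> lattice \<Longrightarrow> a - b \<in> lattice"
  unfolding lattice_def by auto

lemma zero_in_lattice: "0 \<in> lattice"
  unfolding lattice_def by auto

lemma infnorm_lattice_nat:
  assumes "a \<in> lattice"
  shows "\<exists>n::nat. infnorm a = real n"
proof -
  obtain k where k: "\<bar>a$k\<bar> = infnorm a" using infnorm_cart_attained by blast
  obtain m where "a$k = of_int m" using assms unfolding lattice_def by (auto elim: Ints_cases)
  then have "infnorm a = real (nat \<bar>m\<bar>)" using k by simp
  then show ?thesis by blast
qed

lemma norm_lattice_ge_1:
  assumes "a \<in> lattice" "a \<noteq> 0"
  shows "1 \<le> norm a"
proof -
  obtain k where k: "a$k \<noteq> 0" using assms(2) by (auto simp: vec_eq_iff)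
  obtain m where m: "a$k = of_int m" using assms(1) unfolding lattice_def by (auto elim: Ints_cases)
  then have "m \<noteq> 0" using k by auto
  then have "1 \<le> \<bar>a$k\<bar>" using m by linarith
  then show ?thesis using component_le_norm_cart[of a k] by linarith
qed

lemma lattice_point_near: "\<exists>p\<in>lattice. infnorm (x - p) \<le> 1/2"
proof
  let ?p = "\<chi> k. real_of_int (round (x$k))"
  show "?p \<in> lattice" unfolding lattice_def by auto
  show "infnorm (x - ?p) \<le> 1/2"
    by (rule infnorm_cart_le) (use of_int_round_abs_le in \<open>simp add: abs_minus_commute\<close>)
qed

section \<open>Discrete rays\<close>

lemma round_add_le_1: "\<bar>c\<bar> \<le> 1 \<Longrightarrow> \<bar>round (u + c) - round u\<bar> \<le> (1::int)"
proof -
  assume c: "\<bar>c\<bar> \<le> 1"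
  have "round (u - 1) \<le> round (u + c)" "round (u + c) \<le> round (u + 1)"
    by (rule round_mono, use c in linarith)+
  moreover have "round (u + 1) = round u + 1"
    unfolding round_def using floor_add_int[of "u + 1/2" 1] by (simp add: add_ac)
  moreover have "round (u - 1) = round u - 1"
    unfolding round_def using floor_add_int[of "u - 1 + 1/2" 1] by (simp add: algebra_simps)
  ultimately show ?thesis by linarith
qed

text \<open>The discrete ray from \<open>p\<close> towards \<open>a\<close>: its \<open>r\<close>-th point is the rounding of the point at
  sup-distance \<open>r\<close> from \<open>p\<close> on the segment \<open>[p, a]\<close>. (For \<open>a = p\<close> the division by zero makes it
  constantly \<open>p\<close>.)\<close>
definition ray :: "real^'n \<Rightarrow> real^'n \<Rightarrow> nat \<Rightarrow> real^'n" where
  "ray p a r = p + (\<chi> k. real_of_int (round ((a - p)$k * real r / infnorm (a - p))))"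

lemma ray_in_lattice: "p \<in> lattice \<Longrightarrow> ray p a r \<in> lattice"
  unfolding ray_def by (rule lattice_add) (auto simp: lattice_def)

lemma ray_0 [simp]: "ray p a 0 = p"
  unfolding ray_def by (simp add: vec_eq_iff)

lemma ray_component: "(ray p a r - p)$k = real_of_int (round ((a - p)$k * real r / infnorm (a - p)))"
  unfolding ray_def by simp

lemma ray_component_approx: "\<bar>(a - p)$k * real r / infnorm (a - p) - (ray p a r - p)$k\<bar> \<le> 1/2"
  unfolding ray_component using of_int_round_abs_le by (simp add: abs_minus_commute)

lemma ray_endpoint:
  assumes "a \<in> lattice" "p \<in> lattice" "infnorm (a - p) = real s"
  shows "ray p a s = a"
proof (cases "s = 0")
  case True
  then show ?thesis using assms(3) by (simp add: infnorm_eq_0)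
next
  case False
  have "real_of_int (round ((a - p)$k * real s / infnorm (a - p))) = (a - p)$k" for k
  proof -
    obtain m where "(a - p)$k = of_int m"
      using lattice_diff[OF assms(1,2)] unfolding lattice_def by (auto elim: Ints_cases)
    then show ?thesis using False assms(3) by simp
  qed
  then show ?thesis unfolding ray_def by (simp add: vec_eq_iff)
qed

lemma infnorm_ray_Suc: "infnorm (ray p a (Suc r) - ray p a r) \<le> 1"
proof (rule infnorm_cart_le)
  fix k
  let ?s = "infnorm (a - p)" and ?x = "(a - p)$k"
  have c: "\<bar>?x / ?s\<bar> \<le> 1"
    using component_le_infnorm_cart[of "a - p" k] infnorm_pos_le[of "a - p"]
    by (cases "?s = 0") (auto simp: abs_div real_abs_infnorm)
  have "?x * real (Suc r) / ?s = ?x * real r / ?s + ?x / ?s"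
    by (simp only: of_nat_Suc distrib_left mult_1_right add_divide_distrib)
  then have "\<bar>round (?x * real (Suc r) / ?s) - round (?x * real r / ?s)\<bar> \<le> 1"
    using round_add_le_1[OF c] by simp
  then show "\<bar>(ray p a (Suc r) - ray p a r)$k\<bar> \<le> 1"
    unfolding ray_def by simp
qed

lemma infnorm_ray:
  assumes "infnorm (a - p) = real s" "r \<le> s"
  shows "infnorm (ray p a r - p) = real r"
proof (cases "s = 0")
  case True
  then show ?thesis using assms by (simp add: infnorm_0)
next
  case False
  then have s: "infnorm (a - p) > 0" using assms by auto
  have round_r: "round (real r) = int r" "round (- real r) = - int r"
    using round_of_int[of "int r"] round_of_int[of "- int r"] by simp_all
  have "\<bar>(ray p a r - p)$k\<bar> \<le> real r" for k
  proof -
    let ?y = "(a - p)$k * real r / infnorm (a - p)"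
    have "\<bar>?y\<bar> \<le> real r"
      using mult_right_mono[OF component_le_infnorm_cart[of "a - p" k], of "real r"] s
      by (simp add: abs_mult abs_div divide_le_eq mult.commute)
    then have "round (- real r) \<le> round ?y" "round ?y \<le> round (real r)"
      by (intro round_mono; linarith)+
    then show ?thesis unfolding ray_component round_r by linarith
  qed
  then have le: "infnorm (ray p a r - p) \<le> real r" by (rule infnorm_cart_le)
  obtain k where k: "\<bar>(a - p)$k\<bar> = infnorm (a - p)" using infnorm_cart_attained by blast
  then have "(a - p)$k = infnorm (a - p) \<or> (a - p)$k = - infnorm (a - p)" by linarith
  then have "(a - p)$k * real r / infnorm (a - p) \<in> {real r, - real r}" using s by auto
  then have "\<bar>(ray p a r - p)$k\<bar> = real r" unfolding ray_component using round_r by auto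
  then show ?thesis using le component_le_infnorm_cart[of "ray p a r - p" k] by linarith
qed

section \<open>Counting lattice points along rays\<close>

lemma card_int_interval_le:
  assumes "0 \<le> w"
  shows "finite {m::int. \<bar>real_of_int m - c\<bar> \<le> w}"
    and "real (card {m::int. \<bar>real_of_int m - c\<bar> \<le> w}) \<le> 2 * w + 1"
proof -
  let ?S = "{m::int. \<bar>real_of_int m - c\<bar> \<le> w}"
  have sub: "?S \<subseteq> {\<lceil>c - w\<rceil>..\<lfloor>c + w\<rfloor>}"
    by (auto simp: abs_le_iff ceiling_le_iff le_floor_iff)
  then show "finite ?S" using finite_subset by blast
  have "card ?S \<le> nat (\<lfloor>c + w\<rfloor> + 1 - \<lceil>c - w\<rceil>)"
    using card_mono[OF _ sub] by simp
  moreover have "real_of_int \<lfloor>c + w\<rfloor> \<le> c + w" "c - w \<le> real_of_int \<lceil>c - w\<rceil>"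
    by (rule of_int_floor_le, rule le_of_int_ceiling)
  ultimately show "real (card ?S) \<le> 2 * w + 1" using assms by linarith
qed

lemma ratio_plus_one_le:
  fixes n \<rho> :: real
  assumes "1 \<le> \<rho>" "\<rho> \<le> n"
  shows "n / \<rho> + 1 \<le> 4 * (n + 1) / (\<rho> + 1)"
proof -
  have "(n + \<rho>) * (\<rho> + 1) \<le> 4 * (n + 1) * \<rho>"
    using assms by (smt (verit) mult_mono' ring_class.ring_distribs(1,2))
  then show ?thesis using assms by (simp add: field_simps)
qed

text \<open>If the ray towards \<open>a\<close>, with \<open>infnorm (a - p) = n\<close>, passes through \<open>e\<close> at step \<open>\<rho>\<close>, then
  each coordinate of \<open>a - p\<close> lies within \<open>n / (2\<rho>)\<close> of \<open>(e - p)$k * n / \<rho>\<close>.\<close>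
lemma ray_fibre_card_le:
  fixes p e :: "real^'n"
  assumes p: "p \<in> lattice" and rn: "\<rho> \<le> n"
  defines "U \<equiv> {a \<in> lattice. infnorm (a - p) = real n \<and> ray p a \<rho> = e}"
  shows "finite U" and "real (card U) \<le> (4 * (real n + 1) / (real \<rho> + 1)) ^ CARD('n)"
proof -
  define w where "w = (if \<rho> = 0 then real n else real n / (2 * real \<rho>))"
  define c where "c = (\<lambda>k. if \<rho> = 0 then 0 else (e - p)$k * real n / real \<rho>)"
  define I where "I = (\<lambda>k::'n. {m::int. \<bar>real_of_int m - c k\<bar> \<le> w})"
  have w: "0 \<le> w" unfolding w_def by simp
  have card_I: "real (card (I k)) \<le> 4 * (real n + 1) / (real \<rho> + 1)" for k
  proof -
    have "2 * w + 1 \<le> 4 * (real n + 1) / (real \<rho> + 1)"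
      using ratio_plus_one_le[of "real \<rho>" "real n"] rn unfolding w_def by auto
    then show ?thesis using card_int_interval_le(2)[OF w, of "c k"] unfolding I_def by linarith
  qed
  have U_sub: "U \<subseteq> (\<lambda>f. p + (\<chi> k. real_of_int (f k))) ` PiE UNIV I"
  proof
    fix a assume "a \<in> U"
    then have a: "a \<in> lattice" and an: "infnorm (a - p) = real n" and ae: "ray p a \<rho> = e"
      unfolding U_def by auto
    define f where "f = (\<lambda>k. \<lfloor>(a - p)$k\<rfloor>)"
    have f: "real_of_int (f k) = (a - p)$k" for k
      using lattice_diff[OF a p] unfolding f_def lattice_def by (auto elim: Ints_cases)
    have "f k \<in> I k" for k
    proof (cases "\<rho> = 0")
      case True
      then show ?thesis
        using component_le_infnorm_cart[of "a - p" k] an f unfolding I_def c_def w_def by simp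
    next
      case False
      then have pos: "real n > 0" "real \<rho> > 0" using rn by auto
      have "\<bar>(a - p)$k * real \<rho> / real n - (e - p)$k\<bar> \<le> 1/2"
        using ray_component_approx[of a p k \<rho>] an ae by simp
      then have "(real n / real \<rho>) * \<bar>(a - p)$k * real \<rho> / real n - (e - p)$k\<bar> \<le> (real n / real \<rho>) * (1/2)"
        by (rule mult_left_mono) (use pos in simp)
      moreover have "(real n / real \<rho>) * \<bar>(a - p)$k * real \<rho> / real n - (e - p)$k\<bar>
          = \<bar>(a - p)$k - (e - p)$k * real n / real \<rho>\<bar>"
        using pos by (simp add: abs_mult[symmetric] field_simps)
      ultimately show ?thesis unfolding I_def c_def w_def using False f by simp
    qed
    then have "f \<in> PiE UNIV I" by auto
    moreover have "a = p + (\<chi> k. real_of_int (f k))" using f by (simp add: vec_eq_iff)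
    ultimately show "a \<in> (\<lambda>f. p + (\<chi> k. real_of_int (f k))) ` PiE UNIV I" by blast
  qed
  have fin: "finite (PiE UNIV I)"
    by (rule finite_PiE) (auto simp: I_def card_int_interval_le(1)[OF w])
  then show "finite U" using U_sub finite_subset by blast
  have "card U \<le> card (PiE UNIV I)"
    using card_mono[OF _ U_sub] card_image_le[OF fin] fin by (meson finite_imageI le_trans)
  then have "real (card U) \<le> (\<Prod>k\<in>UNIV. real (card (I k)))"
    by (simp add: card_PiE flip: of_nat_prod)
  also have "\<dots> \<le> (\<Prod>k\<in>(UNIV::'n set). 4 * (real n + 1) / (real \<rho> + 1))"
    by (rule prod_mono) (use card_I in simp)
  finally show "real (card U) \<le> (4 * (real n + 1) / (real \<rho> + 1)) ^ CARD('n)" by simp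
qed

lemma sum_inverse_square_le:
  assumes "1 \<le> m"
  shows "(\<Sum>k\<in>{m..<m+j}. 1 / real k ^ 2) \<le> 2 / real m - 2 / real (m + j)"
proof (induction j)
  case (Suc j)
  have "1 / real (m + j) ^ 2 \<le> 2 / real (m + j) - 2 / (real (m + j) + 1)"
    using assms by (simp add: divide_simps power2_eq_square)
  then show ?case using Suc by (simp add: add.commute)
qed simp

lemma sum_inverse_power_le:
  assumes "1 \<le> m" "2 \<le> \<beta>"
  shows "(\<Sum>k\<in>{m..M}. 1 / real k ^ \<beta>) \<le> 2 / real m ^ (\<beta> - 1)"
proof -
  have m: "real m > 0" using assms by simp
  have "(\<Sum>k\<in>{m..M}. 1 / real k ^ \<beta>) \<le> (\<Sum>k\<in>{m..M}. 1 / real m ^ (\<beta> - 2) * (1 / real k ^ 2))"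
  proof (rule sum_mono)
    fix k assume "k \<in> {m..M}"
    then have km: "real m \<le> real k" by simp
    have "real k ^ \<beta> = real k ^ (\<beta> - 2) * real k ^ 2"
      using assms(2) by (metis le_add_diff_inverse2 power_add)
    moreover have "real m ^ (\<beta> - 2) \<le> real k ^ (\<beta> - 2)" by (rule power_mono[OF km]) simp
    ultimately show "1 / real k ^ \<beta> \<le> 1 / real m ^ (\<beta> - 2) * (1 / real k ^ 2)"
      using m km by (simp add: divide_simps mult_right_mono)
  qed
  also have "\<dots> = 1 / real m ^ (\<beta> - 2) * (\<Sum>k\<in>{m..M}. 1 / real k ^ 2)"
    by (simp add: sum_distrib_left)
  also have "\<dots> \<le> 1 / real m ^ (\<beta> - 2) * (2 / real m)"
  proof (rule mult_left_mono)
    show "(\<Sum>k\<in>{m..M}. 1 / real k ^ 2) \<le> 2 / real m"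
    proof (cases "m \<le> M")
      case True
      then have M: "{m..M} = {m..<m + (M + 1 - m)}" by auto
      have "0 \<le> 2 / real (m + (M + 1 - m))" by simp
      then show ?thesis unfolding M using sum_inverse_square_le[OF assms(1), of "M + 1 - m"] by linarith
    qed (use m in simp)
  qed simp
  also have "\<dots> = 2 / real m ^ (\<beta> - 1)"
  proof -
    have "real m ^ (\<beta> - 1) = real m ^ (\<beta> - 2) * real m"
      using assms(2) by (metis Suc_diff_Suc Suc_1 Suc_le_lessD power_Suc2)
    then show ?thesis by simp
  qed
  finally show ?thesis .
qed

lemma sum_level_weights_le:
  assumes N: "d + 2 \<le> N"
  shows "(\<Sum>n\<in>{\<rho>..M}. (4 * (real n + 1) / (real \<rho> + 1)) ^ d / (1 + real n) ^ N)
           \<le> 2 * 4 ^ d / (1 + real \<rho>) ^ (N - 1)"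
proof -
  let ?K = "4 ^ d / (real \<rho> + 1) ^ d"
  have "(4 * (real n + 1) / (real \<rho> + 1)) ^ d / (1 + real n) ^ N = ?K * (1 / real (Suc n) ^ (N - d))"
    for n
  proof -
    have "(1 + real n) ^ N = real (Suc n) ^ d * real (Suc n) ^ (N - d)"
      using N by (simp add: power_add[symmetric] add.commute)
    moreover have "(4 * (real n + 1) / (real \<rho> + 1)) ^ d = ?K * real (Suc n) ^ d"
      by (simp add: power_divide flip: power_mult_distrib) (simp add: algebra_simps)
    ultimately show ?thesis by simp
  qed
  then have "(\<Sum>n\<in>{\<rho>..M}. (4 * (real n + 1) / (real \<rho> + 1)) ^ d / (1 + real n) ^ N)
      = ?K * (\<Sum>n\<in>{\<rho>..M}. 1 / real (Suc n) ^ (N - d))"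
    by (simp only: sum_distrib_left)
  also have "(\<Sum>n\<in>{\<rho>..M}. 1 / real (Suc n) ^ (N - d)) = (\<Sum>k\<in>{Suc \<rho>..Suc M}. 1 / real k ^ (N - d))"
    by (rule sum.shift_bounds_cl_Suc_ivl[symmetric])
  also have "?K * \<dots> \<le> ?K * (2 / real (Suc \<rho>) ^ (N - d - 1))"
    by (rule mult_left_mono) (rule sum_inverse_power_le, use N in auto)
  also have "\<dots> = 2 * 4 ^ d / (1 + real \<rho>) ^ (N - 1)"
  proof -
    have "real (Suc \<rho>) ^ (N - 1) = real (Suc \<rho>) ^ d * real (Suc \<rho>) ^ (N - d - 1)"
      using N by (simp add: power_add[symmetric])
    then show ?thesis by (simp add: add.commute)
  qed
  finally show ?thesis .
qed

definition decay :: "nat \<Rightarrow> real^'n \<Rightarrow> real" where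
  "decay N x = 1 / (1 + infnorm x) ^ N"

lemma decay_nonneg: "0 \<le> decay N x"
  unfolding decay_def using infnorm_pos_le[of x] by simp

text \<open>Group the points \<open>a\<close> by their level \<open>n = infnorm (a - p) \<ge> \<rho>\<close>: by \<open>ray_fibre_card_le\<close>
  each level contributes at most \<open>(4 (n + 1) / (\<rho> + 1))^d / (n + 1)^N\<close>.\<close>
lemma ray_decay_sum_le:
  fixes p e :: "real^'n"
  assumes p: "p \<in> lattice" and e: "e \<in> lattice" and F: "finite F" "F \<subseteq> lattice"
    and N: "CARD('n) + 2 \<le> N"
  shows "(\<Sum>a\<in>{a\<in>F. \<exists>r. real r \<le> infnorm (a - p) \<and> ray p a r = e}. decay N (a - p))
          \<le> 2 * 4 ^ CARD('n) * decay (N - 1) (e - p)"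
proof -
  let ?d = "CARD('n)"
  obtain \<rho> where \<rho>: "infnorm (e - p) = real \<rho>" using infnorm_lattice_nat[OF lattice_diff[OF e p]] by blast
  define lev where "lev a = nat \<lfloor>infnorm (a - p)\<rfloor>" for a
  have lev: "infnorm (a - p) = real (lev a)" if "a \<in> lattice" for a
    using infnorm_lattice_nat[OF lattice_diff[OF that p]] unfolding lev_def by auto
  define T where "T = {a\<in>F. \<exists>r. real r \<le> infnorm (a - p) \<and> ray p a r = e}"
  have T: "a \<in> lattice \<and> \<rho> \<le> lev a \<and> ray p a \<rho> = e" if aT: "a \<in> T" for a
  proof -
    obtain r where a: "a \<in> lattice" "real r \<le> infnorm (a - p)" "ray p a r = e"
      using aT F unfolding T_def by blast
    then have r: "r \<le> lev a" using lev by simp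
    then have "r = \<rho>" using infnorm_ray[OF lev[OF a(1)] r] a(3) \<rho> by simp
    then show ?thesis using a r by simp
  qed
  define M where "M = Max (insert \<rho> (lev ` F))"
  have lev_T: "lev ` T \<subseteq> {\<rho>..M}"
    using T F(1) unfolding M_def T_def by (force intro: Max_ge)
  have "(\<Sum>a\<in>T. decay N (a - p)) = (\<Sum>n\<in>{\<rho>..M}. \<Sum>a\<in>{a\<in>T. lev a = n}. decay N (a - p))"
    by (rule sum.group[symmetric, OF _ _ lev_T]) (use F(1) in \<open>simp_all add: T_def\<close>)
  also have "\<dots> \<le> (\<Sum>n\<in>{\<rho>..M}. (4 * (real n + 1) / (real \<rho> + 1)) ^ ?d / (1 + real n) ^ N)"
  proof (rule sum_mono)
    fix n assume n: "n \<in> {\<rho>..M}"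
    define U where "U = {a \<in> lattice. infnorm (a - p) = real n \<and> ray p a \<rho> = e}"
    have "{a\<in>T. lev a = n} \<subseteq> U" using T lev unfolding U_def by auto
    then have "card {a\<in>T. lev a = n} \<le> card U"
      using ray_fibre_card_le(1)[OF p, of \<rho> n e] n card_mono unfolding U_def by auto
    then have "real (card {a\<in>T. lev a = n}) \<le> (4 * (real n + 1) / (real \<rho> + 1)) ^ ?d"
      using ray_fibre_card_le(2)[OF p, of \<rho> n e] n unfolding U_def by simp
    moreover have "(\<Sum>a\<in>{a\<in>T. lev a = n}. decay N (a - p)) = real (card {a\<in>T. lev a = n}) / (1 + real n) ^ N"
      using T lev by (simp add: decay_def)
    ultimately show "(\<Sum>a\<in>{a\<in>T. lev a = n}. decay N (a - p))
        \<le> (4 * (real n + 1) / (real \<rho> + 1)) ^ ?d / (1 + real n) ^ N"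
      by (simp add: divide_right_mono)
  qed
  also have "\<dots> \<le> 2 * 4 ^ ?d / (1 + real \<rho>) ^ (N - 1)"
    by (rule sum_level_weights_le[OF N])
  also have "\<dots> = 2 * 4 ^ ?d * decay (N - 1) (e - p)"
    unfolding decay_def \<rho> by simp
  finally show ?thesis unfolding T_def .
qed

lemma sum_decay_lattice_le:
  fixes p :: "real^'n"
  assumes p: "p \<in> lattice" and F: "finite F" "F \<subseteq> lattice" and N: "CARD('n) + 2 \<le> N"
  shows "(\<Sum>a\<in>F. decay N (a - p)) \<le> 2 * 4 ^ CARD('n)"
proof -
  have "{a\<in>F. \<exists>r. real r \<le> infnorm (a - p) \<and> ray p a r = p} = F"
    by (force intro: exI[of _ 0] simp: infnorm_pos_le)
  then show ?thesis
    using ray_decay_sum_le[OF p p F N] by (simp add: decay_def infnorm_0)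
qed

lemma decay_summable_on_lattice:
  fixes p :: "real^'n"
  assumes "p \<in> lattice" "S \<subseteq> lattice" "CARD('n) + 2 \<le> N"
  shows "(\<lambda>a. decay N (a - p)) summable_on S"
  using assms sum_decay_lattice_le[OF assms(1) _ _ assms(3)] decay_nonneg
  by (intro nonneg_bdd_above_summable_on bdd_aboveI2) force+

lemma infsum_decay_lattice_le:
  fixes p :: "real^'n"
  assumes "p \<in> lattice" "S \<subseteq> lattice" "CARD('n) + 2 \<le> N"
  shows "(\<Sum>\<^sub>\<infinity>a\<in>S. decay N (a - p)) \<le> 2 * 4 ^ CARD('n)"
  using assms sum_decay_lattice_le[OF assms(1) _ _ assms(3)]
  by (intro infsum_le_finite_sums decay_summable_on_lattice) auto

text \<open>The ray from \<open>p \<notin> B\<close> to \<open>a \<in> B\<close> enters \<open>B\<close> at some step; the two points of the ray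
  around that step are adjacent, so one of them lies in \<open>E\<close>.\<close>
lemma ray_meets_boundary:
  assumes B: "B \<subseteq> lattice" "a \<in> B" and p: "p \<in> lattice" "p \<notin> B"
    and adj: "\<And>u v. u \<in> lattice \<Longrightarrow> v \<in> lattice \<Longrightarrow> u \<notin> B \<Longrightarrow> v \<in> B \<Longrightarrow>
                infnorm (u - v) \<le> 1 \<Longrightarrow> u \<in> E \<or> v \<in> E"
  shows "\<exists>r. real r \<le> infnorm (a - p) \<and> ray p a r \<in> E"
proof -
  have a: "a \<in> lattice" using B by blast
  obtain s where s: "infnorm (a - p) = real s" using infnorm_lattice_nat[OF lattice_diff[OF a p(1)]] by blast
  let ?P = "\<lambda>r. ray p a r \<in> B"
  have Ps: "?P s" using ray_endpoint[OF a p(1) s] B by simp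
  define r0 where "r0 = (LEAST r. ?P r)"
  have "?P r0" unfolding r0_def by (rule LeastI[of _ s]) (fact Ps)
  moreover have "r0 \<le> s" unfolding r0_def by (rule Least_le) (fact Ps)
  moreover have "r0 \<noteq> 0" using \<open>?P r0\<close> p(2) by (metis ray_0)
  then obtain q where q: "r0 = Suc q" using not0_implies_Suc by blast
  moreover have "\<not> ?P q" using not_less_Least[of q ?P] q unfolding r0_def by simp
  moreover have "infnorm (ray p a q - ray p a (Suc q)) \<le> 1"
    using infnorm_ray_Suc[of p a q] by (simp add: infnorm_sub)
  ultimately have "ray p a q \<in> E \<or> ray p a (Suc q) \<in> E"
    using adj ray_in_lattice[OF p(1)] by blast
  moreover have "real q \<le> infnorm (a - p)" "real (Suc q) \<le> infnorm (a - p)"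
    using \<open>r0 \<le> s\<close> q s by auto
  ultimately show ?thesis by blast
qed

text \<open>Charge every \<open>a \<in> B\<close> to a point of \<open>E\<close> on its ray and count the charges with
  \<open>ray_decay_sum_le\<close>.\<close>
lemma infsum_decay_le_boundary:
  fixes B E :: "(real^'n) set"
  assumes B: "B \<subseteq> lattice" and E: "E \<subseteq> lattice" and p: "p \<in> lattice" "p \<notin> B"
    and adj: "\<And>u v. u \<in> lattice \<Longrightarrow> v \<in> lattice \<Longrightarrow> u \<notin> B \<Longrightarrow> v \<in> B \<Longrightarrow>
                infnorm (u - v) \<le> 1 \<Longrightarrow> u \<in> E \<or> v \<in> E"
    and N: "CARD('n) + 3 \<le> N"
  shows "(\<Sum>\<^sub>\<infinity>a\<in>B. decay N (a - p)) \<le> 2 * 4 ^ CARD('n) * (\<Sum>\<^sub>\<infinity>e\<in>E. decay (N - 1) (e - p))"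
proof -
  obtain hit where hit: "\<And>a. a \<in> B \<Longrightarrow> hit a \<in> E \<and> (\<exists>r. real r \<le> infnorm (a - p) \<and> ray p a r = hit a)"
  proof -
    have "\<exists>e. e \<in> E \<and> (\<exists>r. real r \<le> infnorm (a - p) \<and> ray p a r = e)" if "a \<in> B" for a
      using ray_meets_boundary[OF B that p adj] by blast
    then show ?thesis using that by metis
  qed
  have N2: "CARD('n) + 2 \<le> N" "CARD('n) + 2 \<le> N - 1" using N by auto
  show ?thesis
  proof (rule infsum_le_finite_sums[OF decay_summable_on_lattice[OF p(1) B N2(1)]])
    fix F assume F: "finite F" "F \<subseteq> B"
    have "(\<Sum>a\<in>F. decay N (a - p)) = (\<Sum>e\<in>hit ` F. \<Sum>a\<in>{a\<in>F. hit a = e}. decay N (a - p))"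
      by (rule sum.group[symmetric]) (use F in auto)
    also have "\<dots> \<le> (\<Sum>e\<in>hit ` F. \<Sum>a\<in>{a\<in>F. \<exists>r. real r \<le> infnorm (a - p) \<and> ray p a r = e}. decay N (a - p))"
      by (intro sum_mono sum_mono2) (use F hit decay_nonneg in fastforce)+
    also have "\<dots> \<le> (\<Sum>e\<in>hit ` F. 2 * 4 ^ CARD('n) * decay (N - 1) (e - p))"
      by (intro sum_mono ray_decay_sum_le[OF p(1) _ F(1) _ N2(1)]) (use F B E hit in auto)
    also have "\<dots> \<le> 2 * 4 ^ CARD('n) * (\<Sum>\<^sub>\<infinity>e\<in>E. decay (N - 1) (e - p))"
      unfolding sum_distrib_left[symmetric]
      by (intro mult_left_mono finite_sum_le_infsum decay_summable_on_lattice[OF p(1) E N2(2)])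
        (use F hit decay_nonneg in auto)
    finally show "(\<Sum>a\<in>F. decay N (a - p)) \<le> 2 * 4 ^ CARD('n) * (\<Sum>\<^sub>\<infinity>e\<in>E. decay (N - 1) (e - p))" .
  qed
qed

section \<open>Differentiating unordered sums\<close>

lemma summable_on_abs_le:
  fixes f M :: "'a \<Rightarrow> real"
  assumes "M summable_on S" "\<And>a. a \<in> S \<Longrightarrow> \<bar>f a\<bar> \<le> M a"
  shows "f summable_on S"
proof -
  have "(\<lambda>a. norm (M a)) summable_on S"
  proof (subst summable_on_cong)
    show "norm (M a) = M a" if "a \<in> S" for a
      using assms(2)[OF that] by simp
  qed (fact assms(1))
  then have "(\<lambda>a. norm (f a)) summable_on S"
    by (rule Infinite_Sum.abs_summable_on_comparison_test) (use assms(2) in force)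
  then show ?thesis by (rule Infinite_Sum.abs_summable_summable)
qed

lemma abs_infsum_le:
  fixes f M :: "'a \<Rightarrow> real"
  assumes "M summable_on S" "\<And>a. a \<in> S \<Longrightarrow> \<bar>f a\<bar> \<le> M a"
  shows "\<bar>infsum f S\<bar> \<le> infsum M S"
  using norm_infsum_le[OF has_sum_infsum[OF summable_on_abs_le[OF assms]] has_sum_infsum[OF assms(1)]]
    assms(2) by simp

lemma infsum_split_finite:
  fixes f :: "'a \<Rightarrow> real"
  assumes "f summable_on S" "finite F" "F \<subseteq> S"
  shows "infsum f S = sum f F + infsum f (S - F)"
proof -
  have "infsum f (F \<union> (S - F)) = infsum f F + infsum f (S - F)"
    by (rule infsum_Un_disjoint) (use assms summable_on_subset_banach[of f S "S - F"] in auto)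
  moreover have "F \<union> (S - F) = S" using assms(3) by auto
  ultimately show ?thesis using assms(2) by simp
qed

text \<open>Cut off a finite set carrying all but \<open>\<epsilon>/8\<close> of \<open>M\<close>; on it use termwise convergence.\<close>
lemma tendsto_infsum_dominated:
  fixes h :: "'b \<Rightarrow> 'a \<Rightarrow> real"
  assumes M: "M summable_on S"
    and dom: "\<forall>\<^sub>F t in F. \<forall>a\<in>S. \<bar>h t a\<bar> \<le> M a"
    and lim: "\<And>a. a \<in> S \<Longrightarrow> ((\<lambda>t. h t a) \<longlongrightarrow> l a) F"
    and F: "F \<noteq> bot"
  shows "((\<lambda>t. \<Sum>\<^sub>\<infinity>a\<in>S. h t a) \<longlongrightarrow> (\<Sum>\<^sub>\<infinity>a\<in>S. l a)) F"
proof (rule tendstoI)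
  fix \<epsilon> :: real assume \<epsilon>: "\<epsilon> > 0"
  have l: "\<bar>l a\<bar> \<le> M a" if a: "a \<in> S" for a
  proof (rule tendsto_upperbound[OF tendsto_rabs[OF lim[OF a]] _ F])
    show "\<forall>\<^sub>F t in F. \<bar>h t a\<bar> \<le> M a" using dom by eventually_elim (use a in auto)
  qed
  obtain F0 where F0: "finite F0" "F0 \<subseteq> S" "dist (sum M F0) (infsum M S) \<le> \<epsilon>/8"
    using infsum_finite_approximation[OF M, of "\<epsilon>/8"] \<epsilon> by auto
  let ?R = "S - F0"
  have M_R: "M summable_on ?R" using M summable_on_subset_banach by blast
  have tail: "infsum M ?R \<le> \<epsilon>/8"
    using infsum_split_finite[OF M F0(1,2)] F0(3) by (simp add: dist_real_def)
  have tail_bound: "\<bar>infsum g ?R\<bar> \<le> \<epsilon>/8" if "\<And>a. a \<in> S \<Longrightarrow> \<bar>g a\<bar> \<le> M a" for g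
    using abs_infsum_le[OF M_R, of g] that tail by force
  have head: "\<forall>\<^sub>F t in F. dist (sum (h t) F0) (sum l F0) < \<epsilon>/2"
    using tendstoD[OF tendsto_sum[of F0 "\<lambda>a t. h t a" l F], of "\<epsilon>/2"] lim F0(2) \<epsilon> by auto
  show "\<forall>\<^sub>F t in F. dist (\<Sum>\<^sub>\<infinity>a\<in>S. h t a) (\<Sum>\<^sub>\<infinity>a\<in>S. l a) < \<epsilon>"
    using dom head
  proof eventually_elim
    case (elim t)
    have "infsum (h t) S = sum (h t) F0 + infsum (h t) ?R"
      by (rule infsum_split_finite[OF summable_on_abs_le[OF M] F0(1,2)]) (use elim(1) in auto)
    moreover have "infsum l S = sum l F0 + infsum l ?R"
      by (rule infsum_split_finite[OF summable_on_abs_le[OF M] F0(1,2)]) (use l in auto)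
    moreover have "\<bar>infsum (h t) ?R\<bar> \<le> \<epsilon>/8" "\<bar>infsum l ?R\<bar> \<le> \<epsilon>/8"
      using tail_bound elim(1) l by auto
    ultimately show ?case using elim(2) unfolding dist_real_def by linarith
  qed
qed

lemma has_real_derivative_line:
  fixes f :: "'a::real_normed_vector \<Rightarrow> real"
  assumes "f differentiable (at (y + t *\<^sub>R v))"
  shows "((\<lambda>s. f (y + s *\<^sub>R v)) has_real_derivative frechet_derivative f (at (y + t *\<^sub>R v)) v) (at t)"
proof -
  let ?D = "frechet_derivative f (at (y + t *\<^sub>R v))"
  have D: "(f has_derivative ?D) (at (y + t *\<^sub>R v))" using assms frechet_derivative_works by blast
  have "((f \<circ> (\<lambda>s. y + s *\<^sub>R v)) has_derivative (?D \<circ> (\<lambda>h. h *\<^sub>R v))) (at t)"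
    by (rule diff_chain_at) (auto intro!: derivative_eq_intros D)
  moreover have "?D \<circ> (\<lambda>h. h *\<^sub>R v) = (\<lambda>h. ?D v * h)"
    using linear_scale[OF has_derivative_linear[OF D]] by (auto simp: fun_eq_iff mult.commute)
  ultimately show ?thesis unfolding has_field_derivative_def by (simp add: o_def)
qed

lemma has_real_derivative_infsum:
  fixes \<phi> \<phi>' :: "'a \<Rightarrow> real \<Rightarrow> real"
  assumes \<delta>: "\<delta> > 0"
    and deriv: "\<And>a t. a \<in> S \<Longrightarrow> \<bar>t - t0\<bar> \<le> \<delta> \<Longrightarrow> (\<phi> a has_real_derivative \<phi>' a t) (at t)"
    and bound: "\<And>a t. a \<in> S \<Longrightarrow> \<bar>t - t0\<bar> \<le> \<delta> \<Longrightarrow> \<bar>\<phi>' a t\<bar> \<le> M a"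
    and M: "M summable_on S"
    and summable: "\<And>t. \<bar>t - t0\<bar> \<le> \<delta> \<Longrightarrow> (\<lambda>a. \<phi> a t) summable_on S"
  shows "((\<lambda>t. \<Sum>\<^sub>\<infinity>a\<in>S. \<phi> a t) has_real_derivative (\<Sum>\<^sub>\<infinity>a\<in>S. \<phi>' a t0)) (at t0)"
proof -
  let ?I = "{t0 - \<delta>..t0 + \<delta>}"
  define q where "q t a = (\<phi> a t - \<phi> a t0) / (t - t0)" for t a
  have lipschitz: "\<bar>\<phi> a t - \<phi> a t0\<bar> \<le> M a * \<bar>t - t0\<bar>" if a: "a \<in> S" and t: "t \<in> ?I" for a t
    using field_differentiable_bound[of ?I "\<phi> a" "\<phi>' a" "M a" t t0] a t \<delta> deriv bound
    by (force simp: abs_le_iff has_field_derivative_at_within)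
  have near: "\<forall>\<^sub>F t in at t0. t \<noteq> t0 \<and> t \<in> ?I"
    using \<delta> by (auto simp: eventually_at dist_real_def abs_le_iff intro!: exI[of _ \<delta>])
  have "((\<lambda>t. \<Sum>\<^sub>\<infinity>a\<in>S. q t a) \<longlongrightarrow> (\<Sum>\<^sub>\<infinity>a\<in>S. \<phi>' a t0)) (at t0)"
  proof (rule tendsto_infsum_dominated[OF M _ _ at_neq_bot])
    show "\<forall>\<^sub>F t in at t0. \<forall>a\<in>S. \<bar>q t a\<bar> \<le> M a"
      using near by eventually_elim (use lipschitz in \<open>auto simp: q_def abs_div divide_le_eq\<close>)
    show "((\<lambda>t. q t a) \<longlongrightarrow> \<phi>' a t0) (at t0)" if "a \<in> S" for a
      using deriv[OF that, of t0] \<delta> unfolding has_field_derivative_iff q_def by simp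
  qed
  moreover have "\<forall>\<^sub>F t in at t0. (\<Sum>\<^sub>\<infinity>a\<in>S. q t a) =
      ((\<Sum>\<^sub>\<infinity>a\<in>S. \<phi> a t) - (\<Sum>\<^sub>\<infinity>a\<in>S. \<phi> a t0)) / (t - t0)"
    using near
  proof eventually_elim
    case (elim t)
    then have "(\<lambda>a. \<phi> a t) summable_on S" "(\<lambda>a. - \<phi> a t0) summable_on S"
      using summable \<delta> by (auto simp: abs_le_iff summable_on_uminus)
    then have "(\<Sum>\<^sub>\<infinity>a\<in>S. \<phi> a t + - \<phi> a t0) = (\<Sum>\<^sub>\<infinity>a\<in>S. \<phi> a t) - (\<Sum>\<^sub>\<infinity>a\<in>S. \<phi> a t0)"
      by (simp only: infsum_add infsum_uminus)
    moreover have "(\<Sum>\<^sub>\<infinity>a\<in>S. q t a) = (\<Sum>\<^sub>\<infinity>a\<in>S. \<phi> a t + - \<phi> a t0) * inverse (t - t0)"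
      unfolding q_def divide_inverse diff_conv_add_uminus by (rule infsum_cmult_left')
    ultimately show ?case by (simp add: divide_inverse)
  qed
  ultimately show ?thesis
    unfolding has_field_derivative_iff by (rule Lim_transform_eventually)
qed

section \<open>Decay of the partial derivatives\<close>

definition partial :: "(real^'n \<Rightarrow> real) \<Rightarrow> 'n \<Rightarrow> real^'n \<Rightarrow> real" where
  "partial f j z = frechet_derivative f (at z) (axis j 1)"

lemma has_real_derivative_partial:
  assumes "f differentiable (at (x + t *\<^sub>R axis j 1))"
  shows "((\<lambda>s. f (x + s *\<^sub>R axis j 1)) has_real_derivative partial f j (x + t *\<^sub>R axis j 1)) (at t)"
  unfolding partial_def by (rule has_real_derivative_line[OF assms])

lemma abs_partial_le_onorm:
  assumes "f differentiable (at z)"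
  shows "\<bar>partial f j z\<bar> \<le> onorm (frechet_derivative f (at z))"
  using onorm[OF has_derivative_bounded_linear[OF frechet_derivative_works[THEN iffD1, OF assms]],
      of "axis j 1"]
  by (simp add: partial_def norm_axis_1)

lemma inverse_power_le_decay:
  fixes a u :: "real^'n"
  assumes "0 < c" "c * (1 + infnorm a) \<le> 1 + norm u" "0 \<le> K"
  shows "K / (1 + norm u) ^ N \<le> K / c ^ N * decay N a"
proof -
  have "(c * (1 + infnorm a)) ^ N \<le> (1 + norm u) ^ N"
    using assms infnorm_pos_le[of a] by (intro power_mono) auto
  moreover have "0 < (c * (1 + infnorm a)) ^ N" "0 < (1 + norm u) ^ N"
    using assms(1) infnorm_pos_le[of a] by (simp_all add: add_pos_nonneg)
  ultimately have "K / (1 + norm u) ^ N \<le> K / (c * (1 + infnorm a)) ^ N"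
    using assms(3) by (intro divide_left_mono mult_pos_pos)
  then show ?thesis by (simp add: decay_def power_mult_distrib)
qed

lemma partial_decay_far:
  fixes f :: "real^'n \<Rightarrow> real"
  assumes "f differentiable (at z)"
    and "onorm (frechet_derivative f (at z)) \<le> C * norm z powr - real N"
    and "0 \<le> C" "1/4 \<le> norm z"
  shows "\<bar>partial f j z\<bar> \<le> C * 5 ^ N / (1 + norm z) ^ N"
proof -
  have z: "0 < norm z" using assms(4) by linarith
  have "(1 + norm z) ^ N \<le> (5 * norm z) ^ N" by (rule power_mono) (use assms(4) in auto)
  then have "5 ^ N / (5 * norm z) ^ N \<le> 5 ^ N / (1 + norm z) ^ N"
    by (rule divide_left_mono) (use z in \<open>simp_all add: add_pos_nonneg\<close>)
  then have "1 / norm z ^ N \<le> 5 ^ N / (1 + norm z) ^ N"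
    using z by (simp add: power_mult_distrib)
  then have "C * (1 / norm z ^ N) \<le> C * (5 ^ N / (1 + norm z) ^ N)"
    by (rule mult_left_mono) (fact assms(3))
  then have "C * norm z powr - real N \<le> C * 5 ^ N / (1 + norm z) ^ N"
    using z by (simp add: powr_minus_divide powr_realpow)
  then show ?thesis using abs_partial_le_onorm[OF assms(1), of j] assms(2) by linarith
qed

lemma has_sum_one_remove_zero:
  fixes f :: "real^'n \<Rightarrow> real"
  assumes "(f has_sum 1) lattice"
  shows "f 0 = 1 - (\<Sum>\<^sub>\<infinity>a\<in>lattice - {0}. f a)"
proof -
  have "f summable_on (lattice - {0})"
    using summable_on_subset_banach[OF has_sum_imp_summable[OF assms]] by blast
  then have "infsum f (insert 0 (lattice - {0})) = f 0 + infsum f (lattice - {0})"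
    by (rule infsum_insert) simp
  moreover have "insert 0 (lattice - {0}) = lattice" using zero_in_lattice by auto
  ultimately show ?thesis using infsumI[OF assms] by (simp add: insert_absorb zero_in_lattice)
qed

text \<open>Near the origin the decay hypothesis says nothing, but there \<open>\<mu>\<close> is 1 minus the sum of its
  nonzero lattice translates, all of which are evaluated far from the origin.\<close>
lemma partial_bounded_near_origin:
  fixes \<mu> :: "real^'n \<Rightarrow> real"
  assumes diff: "\<And>x. \<mu> differentiable (at x)"
    and pou: "\<And>x. ((\<lambda>a. \<mu> (x - a)) has_sum 1) lattice"
    and far: "\<And>z. 1/4 \<le> norm z \<Longrightarrow> \<bar>partial \<mu> j z\<bar> \<le> K / (1 + norm z) ^ N"
    and K: "0 \<le> K" and N: "CARD('n) + 2 \<le> N" and z: "norm z < 1/2"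
  shows "\<bar>partial \<mu> j z\<bar> \<le> K / (3/8) ^ N * (2 * 4 ^ CARD('n))"
proof -
  let ?v = "axis j (1::real)" and ?S = "lattice - {0::real^'n}"
  let ?M = "\<lambda>a. K / (3/8) ^ N * decay N a"
  have bound: "\<bar>partial \<mu> j (z + t *\<^sub>R ?v - a)\<bar> \<le> ?M a" if a: "a \<in> ?S" and t: "\<bar>t - 0\<bar> \<le> 1/8" for a t
  proof -
    let ?u = "z + t *\<^sub>R ?v - a"
    have "norm (z + t *\<^sub>R ?v) \<le> 5/8"
      using norm_triangle_ineq[of z "t *\<^sub>R ?v"] z t by (simp add: norm_axis_1)
    moreover have "norm a - norm (z + t *\<^sub>R ?v) \<le> norm ?u"
      using norm_triangle_ineq2[of a "z + t *\<^sub>R ?v"] by (simp add: norm_minus_commute)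
    moreover have "1 \<le> norm a" using norm_lattice_ge_1 a by blast
    ultimately have u: "1/4 \<le> norm ?u" "3/8 * (1 + infnorm a) \<le> 1 + norm ?u"
      using infnorm_le_norm[of a] by (simp_all add: distrib_left)
    have "\<bar>partial \<mu> j ?u\<bar> \<le> K / (1 + norm ?u) ^ N" by (rule far[OF u(1)])
    also have "\<dots> \<le> K / (3/8) ^ N * decay N a" by (rule inverse_power_le_decay[OF _ u(2) K]) simp
    finally show ?thesis .
  qed
  have M: "?M summable_on ?S"
    by (intro summable_on_cmult_right decay_summable_on_lattice[OF zero_in_lattice _ N, simplified]) auto
  have "((\<lambda>t. \<Sum>\<^sub>\<infinity>a\<in>?S. \<mu> (z + t *\<^sub>R ?v - a)) has_real_derivative
      (\<Sum>\<^sub>\<infinity>a\<in>?S. partial \<mu> j (z + 0 *\<^sub>R ?v - a))) (at 0)"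
  proof (rule has_real_derivative_infsum[where \<delta> = "1/8", OF _ _ bound M])
    show "((\<lambda>t. \<mu> (z + t *\<^sub>R ?v - a)) has_real_derivative partial \<mu> j (z + t *\<^sub>R ?v - a)) (at t)" for a t
      using has_real_derivative_partial[OF diff, where x = "z - a"] by (simp add: algebra_simps)
    show "(\<lambda>a. \<mu> (z + t *\<^sub>R ?v - a)) summable_on ?S" for t
      using summable_on_subset_banach[OF has_sum_imp_summable[OF pou]] by blast
  qed auto
  then have translates: "((\<lambda>t. \<Sum>\<^sub>\<infinity>a\<in>?S. \<mu> (z + t *\<^sub>R ?v - a)) has_real_derivative
      (\<Sum>\<^sub>\<infinity>a\<in>?S. partial \<mu> j (z - a))) (at 0)"
    by (simp only: scale_zero_left add_0_right)
  have "\<mu> (z + t *\<^sub>R ?v) = 1 - (\<Sum>\<^sub>\<infinity>a\<in>?S. \<mu> (z + t *\<^sub>R ?v - a))" for t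
    using has_sum_one_remove_zero[OF pou[of "z + t *\<^sub>R ?v"]] by simp
  then have pou_0: "(\<lambda>t. \<mu> (z + t *\<^sub>R ?v)) = (\<lambda>t. 1 - (\<Sum>\<^sub>\<infinity>a\<in>?S. \<mu> (z + t *\<^sub>R ?v - a)))" ..
  have "((\<lambda>t. \<mu> (z + t *\<^sub>R ?v)) has_real_derivative 0 - (\<Sum>\<^sub>\<infinity>a\<in>?S. partial \<mu> j (z - a))) (at 0)"
    unfolding pou_0 by (rule DERIV_diff[OF DERIV_const translates])
  then have "partial \<mu> j (z + 0 *\<^sub>R ?v) = 0 - (\<Sum>\<^sub>\<infinity>a\<in>?S. partial \<mu> j (z - a))"
    by (rule DERIV_unique[OF has_real_derivative_partial[OF diff]])
  then have "partial \<mu> j z = - (\<Sum>\<^sub>\<infinity>a\<in>?S. partial \<mu> j (z - a))" by simp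
  moreover have "\<bar>\<Sum>\<^sub>\<infinity>a\<in>?S. partial \<mu> j (z - a)\<bar> \<le> (\<Sum>\<^sub>\<infinity>a\<in>?S. ?M a)"
    by (rule abs_infsum_le[OF M]) (use bound[of _ 0] in simp)
  moreover have "(\<Sum>\<^sub>\<infinity>a\<in>?S. ?M a) \<le> K / (3/8) ^ N * (2 * 4 ^ CARD('n))"
    unfolding infsum_cmult_right'
    by (intro mult_left_mono infsum_decay_lattice_le[OF zero_in_lattice _ N, simplified]) (use K in auto)
  ultimately show ?thesis by simp
qed

lemma partial_decay:
  fixes \<mu> :: "real^'n \<Rightarrow> real"
  assumes diff: "\<And>x. \<mu> differentiable (at x)"
    and pou: "\<And>x. ((\<lambda>a. \<mu> (x - a)) has_sum 1) lattice"
    and onorm: "\<And>x. x \<noteq> 0 \<Longrightarrow> onorm (frechet_derivative \<mu> (at x)) \<le> C * norm x powr - real N"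
    and C: "0 \<le> C" and N: "CARD('n) + 2 \<le> N"
  shows "\<exists>K>0. \<forall>j z. \<bar>partial \<mu> j z\<bar> \<le> K / (1 + norm z) ^ N"
proof -
  define K0 where "K0 = C * 5 ^ N"
  define K1 where "K1 = K0 / (3/8) ^ N * (2 * 4 ^ CARD('n))"
  have K0: "0 \<le> K0" and K1: "0 \<le> K1" unfolding K0_def K1_def using C by simp_all
  have far: "\<bar>partial \<mu> j z\<bar> \<le> K0 / (1 + norm z) ^ N" if "1/4 \<le> norm z" for j z
    unfolding K0_def using that by (intro partial_decay_far diff onorm C) auto
  have "\<bar>partial \<mu> j z\<bar> \<le> (K0 + K1 * (3/2) ^ N + 1) / (1 + norm z) ^ N" for j z
  proof (cases "norm z < 1/2")
    case True
    have pos: "0 < (1 + norm z) ^ N" by (simp add: add_pos_nonneg)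
    have "(1 + norm z) ^ N \<le> (3/2) ^ N" by (rule power_mono) (use True in auto)
    then have "K1 \<le> K1 * (3/2) ^ N / (1 + norm z) ^ N"
      using K1 pos by (simp add: le_divide_eq mult_left_mono)
    also have "\<dots> \<le> (K0 + K1 * (3/2) ^ N + 1) / (1 + norm z) ^ N"
      by (rule divide_right_mono) (use K0 pos in auto)
    finally show ?thesis
      using partial_bounded_near_origin[where j = j, OF diff pou far K0 N True] unfolding K1_def by linarith
  next
    case False
    then have "\<bar>partial \<mu> j z\<bar> \<le> K0 / (1 + norm z) ^ N" by (intro far) simp
    also have "\<dots> \<le> (K0 + K1 * (3/2) ^ N + 1) / (1 + norm z) ^ N"
      by (rule divide_right_mono) (use K1 in \<open>auto simp: add_pos_nonneg\<close>)
    finally show ?thesis .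
  qed
  moreover have "0 < K0 + K1 * (3/2) ^ N + 1" using K0 K1 by (simp add: add_nonneg_pos)
  ultimately show ?thesis by blast
qed

section \<open>The boundary estimate\<close>

lemma lbdry_subset_lattice: "A \<subseteq> lattice \<Longrightarrow> lbdry A \<subseteq> lattice"
  unfolding lbdry_def plusH_def Hcube_def using lattice_add by blast

lemma mem_lbdry:
  assumes "v \<in> A" "u \<notin> A" "u \<in> lattice" "v \<in> lattice" "infnorm (u - v) \<le> 1"
  shows "u \<in> lbdry A"
proof -
  have "u - v \<in> Hcube" unfolding Hcube_def
    using lattice_diff[OF assms(3,4)] component_le_infnorm_cart[of "u - v"] assms(5)
    by (auto intro: order_trans)
  then have "u \<in> plusH A" unfolding plusH_def using assms(1) by force
  then show ?thesis unfolding lbdry_def using assms(2) by blast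
qed

lemma partial_translate_bound:
  fixes \<mu> :: "real^'n \<Rightarrow> real"
  assumes decay: "\<And>z. \<bar>partial \<mu> j z\<bar> \<le> K / (1 + norm z) ^ N" and K: "0 \<le> K"
    and x: "infnorm (x - p) \<le> 1/2" and t: "\<bar>t\<bar> \<le> 1/4"
  shows "\<bar>partial \<mu> j (x + t *\<^sub>R axis j 1 - a)\<bar> \<le> K / (1/4) ^ N * decay N (a - p)"
proof -
  let ?y = "x + t *\<^sub>R axis j 1"
  have "infnorm (a - p) \<le> infnorm (a - ?y) + infnorm (x - p) + infnorm (t *\<^sub>R axis j (1::real))"
    using infnorm_triangle[of "a - ?y" "?y - p"] infnorm_triangle[of "x - p" "t *\<^sub>R axis j 1"]
    by (simp add: algebra_simps)
  moreover have "infnorm (a - ?y) \<le> norm (?y - a)"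
    using infnorm_le_norm[of "?y - a"] by (simp add: infnorm_sub)
  moreover have "infnorm (t *\<^sub>R axis j (1::real)) \<le> 1/4"
    using infnorm_le_norm[of "t *\<^sub>R axis j (1::real)"] t by (simp add: norm_axis_1)
  ultimately have "infnorm (a - p) \<le> norm (?y - a) + 3/4"
    using x by linarith
  then have "1/4 * (1 + infnorm (a - p)) \<le> 1 + norm (?y - a)"
    unfolding distrib_left using norm_ge_zero[of "?y - a"] by linarith
  then show ?thesis using decay inverse_power_le_decay[OF _ _ K] by (meson order_trans zero_less_divide_1_iff zero_less_numeral)
qed

lemma muset_has_real_derivative:
  fixes \<mu> :: "real^'n \<Rightarrow> real"
  assumes diff: "\<And>x. \<mu> differentiable (at x)"
    and pou: "\<And>x. ((\<lambda>a. \<mu> (x - a)) has_sum 1) lattice"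
    and decay: "\<And>z. \<bar>partial \<mu> j z\<bar> \<le> K / (1 + norm z) ^ N" and K: "0 \<le> K"
    and N: "CARD('n) + 2 \<le> N" and S: "S \<subseteq> lattice"
  shows "((\<lambda>t. muset \<mu> S (x + t *\<^sub>R axis j 1)) has_real_derivative
           (\<Sum>\<^sub>\<infinity>a\<in>S. partial \<mu> j (x - a))) (at 0)"
proof -
  obtain p where p: "p \<in> lattice" "infnorm (x - p) \<le> 1/2" using lattice_point_near by blast
  have "((\<lambda>t. \<Sum>\<^sub>\<infinity>a\<in>S. \<mu> (x + t *\<^sub>R axis j 1 - a)) has_real_derivative
      (\<Sum>\<^sub>\<infinity>a\<in>S. partial \<mu> j (x + 0 *\<^sub>R axis j 1 - a))) (at 0)"
  proof (rule has_real_derivative_infsum[where \<delta> = "1/4" and M = "\<lambda>a. K / (1/4) ^ N * decay N (a - p)"])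
    show "((\<lambda>t. \<mu> (x + t *\<^sub>R axis j 1 - a)) has_real_derivative partial \<mu> j (x + t *\<^sub>R axis j 1 - a)) (at t)"
      for a t
      using has_real_derivative_partial[OF diff, where x = "x - a"] by (simp add: algebra_simps)
    show "\<bar>partial \<mu> j (x + t *\<^sub>R axis j 1 - a)\<bar> \<le> K / (1/4) ^ N * decay N (a - p)"
      if "\<bar>t - 0\<bar> \<le> 1/4" for a t
      using partial_translate_bound[OF decay K p(2)] that by simp
    show "(\<lambda>a. K / (1/4) ^ N * decay N (a - p)) summable_on S"
      by (intro summable_on_cmult_right decay_summable_on_lattice[OF p(1) S N])
    show "(\<lambda>a. \<mu> (x + t *\<^sub>R axis j 1 - a)) summable_on S" for t
      using summable_on_subset_banach[OF has_sum_imp_summable[OF pou] S] .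
  qed simp
  then show ?thesis unfolding muset_def by (simp only: scale_zero_left add_0_right)
qed

lemma infsum_partial_lattice_eq_0:
  fixes \<mu> :: "real^'n \<Rightarrow> real"
  assumes diff: "\<And>x. \<mu> differentiable (at x)"
    and pou: "\<And>x. ((\<lambda>a. \<mu> (x - a)) has_sum 1) lattice"
    and decay: "\<And>z. \<bar>partial \<mu> j z\<bar> \<le> K / (1 + norm z) ^ N" and K: "0 \<le> K"
    and N: "CARD('n) + 2 \<le> N"
  shows "(\<Sum>\<^sub>\<infinity>a\<in>lattice. partial \<mu> j (x - a)) = 0"
proof -
  have "muset \<mu> lattice y = 1" for y unfolding muset_def by (rule infsumI[OF pou])
  then have "muset \<mu> lattice = (\<lambda>y. 1)" ..
  moreover have "((\<lambda>t. muset \<mu> lattice (x + t *\<^sub>R axis j 1)) has_real_derivative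
      (\<Sum>\<^sub>\<infinity>a\<in>lattice. partial \<mu> j (x - a))) (at 0)"
    by (rule muset_has_real_derivative[OF diff pou decay K N]) simp
  ultimately have "((\<lambda>t. 1) has_real_derivative (\<Sum>\<^sub>\<infinity>a\<in>lattice. partial \<mu> j (x - a))) (at 0)"
    by (simp only:)
  then show ?thesis using DERIV_const by (rule DERIV_unique)
qed

text \<open>If \<open>p \<in> A\<close>, the sum over \<open>A\<close> is minus the sum over the complement, by
  \<open>infsum_partial_lattice_eq_0\<close>; either way we sum over a set avoiding \<open>p\<close>, whose
  boundary is contained in \<open>lbdry A\<close>.\<close>
lemma abs_infsum_partial_le_boundary:
  fixes \<mu> :: "real^'n \<Rightarrow> real"
  assumes diff: "\<And>x. \<mu> differentiable (at x)"
    and pou: "\<And>x. ((\<lambda>a. \<mu> (x - a)) has_sum 1) lattice"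
    and decay: "\<And>z. \<bar>partial \<mu> j z\<bar> \<le> K / (1 + norm z) ^ N" and K: "0 \<le> K"
    and N: "CARD('n) + 3 \<le> N" and A: "A \<subseteq> lattice"
    and p: "p \<in> lattice" "infnorm (x - p) \<le> 1/2"
  shows "\<bar>\<Sum>\<^sub>\<infinity>a\<in>A. partial \<mu> j (x - a)\<bar>
           \<le> K / (1/4) ^ N * (2 * 4 ^ CARD('n)) * (\<Sum>\<^sub>\<infinity>e\<in>lbdry A. decay (N - 1) (e - p))"
    (is "\<bar>infsum ?g A\<bar> \<le> ?C * ?W")
proof -
  let ?M = "\<lambda>a. K / (1/4) ^ N * decay N (a - p)"
  have N2: "CARD('n) + 2 \<le> N" using N by simp
  have dom: "\<bar>?g a\<bar> \<le> ?M a" for a using partial_translate_bound[OF decay K p(2), of 0] by simp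
  have M: "?M summable_on S" if "S \<subseteq> lattice" for S
    by (intro summable_on_cmult_right decay_summable_on_lattice[OF p(1) that N2])
  have avoiding_p: "\<bar>infsum ?g B\<bar> \<le> ?C * ?W"
    if B: "B \<subseteq> lattice" "p \<notin> B"
      and adj: "\<And>u v. u \<in> lattice \<Longrightarrow> v \<in> lattice \<Longrightarrow> u \<notin> B \<Longrightarrow> v \<in> B \<Longrightarrow>
                  infnorm (u - v) \<le> 1 \<Longrightarrow> u \<in> lbdry A \<or> v \<in> lbdry A" for B
  proof -
    have "\<bar>infsum ?g B\<bar> \<le> K / (1/4) ^ N * (\<Sum>\<^sub>\<infinity>a\<in>B. decay N (a - p))"
      using abs_infsum_le[OF M[OF B(1)] dom] by (simp only: infsum_cmult_right')
    also have "\<dots> \<le> K / (1/4) ^ N * (2 * 4 ^ CARD('n) * ?W)"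
      using infsum_decay_le_boundary[OF B(1) lbdry_subset_lattice[OF A] p(1) B(2) adj N] K
      by (intro mult_left_mono) simp_all
    finally show ?thesis by (simp add: mult_ac)
  qed
  show ?thesis
  proof (cases "p \<in> A")
    case False
    show ?thesis
    proof (rule avoiding_p[OF A False])
      fix u v assume "u \<in> lattice" "v \<in> lattice" "u \<notin> A" "v \<in> A" "infnorm (u - v) \<le> 1"
      then show "u \<in> lbdry A \<or> v \<in> lbdry A" using mem_lbdry[of v A u] by simp
    qed
  next
    case True
    have "infsum ?g (A \<union> (lattice - A)) = infsum ?g A + infsum ?g (lattice - A)"
      by (rule infsum_Un_disjoint[OF summable_on_abs_le[OF M[OF A] dom] summable_on_abs_le[OF M dom]]) auto
    moreover have "A \<union> (lattice - A) = lattice" using A by blast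
    ultimately have "\<bar>infsum ?g A\<bar> = \<bar>infsum ?g (lattice - A)\<bar>"
      using infsum_partial_lattice_eq_0[OF diff pou decay K N2, of x] by simp
    also have "\<dots> \<le> ?C * ?W"
    proof (rule avoiding_p)
      fix u v assume "u \<in> lattice" "v \<in> lattice" "u \<notin> lattice - A" "v \<in> lattice - A" "infnorm (u - v) \<le> 1"
      then show "u \<in> lbdry A \<or> v \<in> lbdry A" using mem_lbdry[of u A v] by (simp add: infnorm_sub)
    qed (use True in auto)
    finally show ?thesis .
  qed
qed

lemma decay_le_translate:
  fixes \<mu> :: "real^'n \<Rightarrow> real"
  assumes lower: "\<And>y. c * (1 + norm y) powr - real \<alpha> \<le> \<mu> y" and c: "0 < c"
    and x: "infnorm (x - p) \<le> 1/2"
  shows "decay \<alpha> (e - p) \<le> (1 + sqrt DIM(real^'n)) ^ \<alpha> / c * \<mu> (x - e)"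
proof -
  let ?s = "sqrt DIM(real^'n)" and ?l = "infnorm (e - p)"
  have "infnorm (x - e) \<le> 1/2 + ?l"
    using infnorm_triangle[of "x - p" "p - e"] x by (simp add: infnorm_sub)
  then have "?s * infnorm (x - e) \<le> ?s * (1 + ?l)" by (intro mult_left_mono) simp_all
  then have "1 + norm (x - e) \<le> (1 + ?s) * (1 + ?l)"
    using norm_le_infnorm[of "x - e"] infnorm_pos_le[of "e - p"] by (simp add: algebra_simps)
  then have "(1 + norm (x - e)) ^ \<alpha> \<le> ((1 + ?s) * (1 + ?l)) ^ \<alpha>"
    by (rule power_mono) simp
  then have "decay \<alpha> (e - p) \<le> (1 + ?s) ^ \<alpha> / (1 + norm (x - e)) ^ \<alpha>"
    using infnorm_pos_le[of "e - p"]
    by (simp add: decay_def power_mult_distrib divide_simps add_pos_nonneg mult.commute)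
  also have "\<dots> = (1 + ?s) ^ \<alpha> / c * (c * (1 + norm (x - e)) powr - real \<alpha>)"
    using c by (simp add: powr_minus_divide powr_realpow add_pos_nonneg)
  also have "\<dots> \<le> (1 + ?s) ^ \<alpha> / c * \<mu> (x - e)"
    using c lower by (intro mult_left_mono) simp_all
  finally show ?thesis .
qed

lemma infsum_decay_le_muset:
  fixes \<mu> :: "real^'n \<Rightarrow> real"
  assumes lower: "\<And>y. c * (1 + norm y) powr - real \<alpha> \<le> \<mu> y" and c: "0 < c"
    and pou: "\<And>x. ((\<lambda>a. \<mu> (x - a)) has_sum 1) lattice"
    and E: "E \<subseteq> lattice" and p: "p \<in> lattice" "infnorm (x - p) \<le> 1/2" and \<alpha>: "CARD('n) + 2 \<le> \<alpha>"
  shows "(\<Sum>\<^sub>\<infinity>e\<in>E. decay \<alpha> (e - p)) \<le> (1 + sqrt DIM(real^'n)) ^ \<alpha> / c * muset \<mu> E x"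
proof -
  have "(\<Sum>\<^sub>\<infinity>e\<in>E. decay \<alpha> (e - p)) \<le> (\<Sum>\<^sub>\<infinity>e\<in>E. (1 + sqrt DIM(real^'n)) ^ \<alpha> / c * \<mu> (x - e))"
    by (intro infsum_mono decay_summable_on_lattice[OF p(1) E \<alpha>] summable_on_cmult_right
        summable_on_subset_banach[OF has_sum_imp_summable[OF pou] E] decay_le_translate[OF lower c p(2)])
  then show ?thesis unfolding muset_def by (simp only: infsum_cmult_right')
qed

lemma abs_infsum_partial_le_muset_boundary:
  fixes \<mu> :: "real^'n \<Rightarrow> real"
  assumes diff: "\<And>x. \<mu> differentiable (at x)"
    and pou: "\<And>x. ((\<lambda>a. \<mu> (x - a)) has_sum 1) lattice"
    and decay: "\<And>z. \<bar>partial \<mu> j z\<bar> \<le> K / (1 + norm z) ^ N" and K: "0 \<le> K"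
    and lower: "\<And>y. c * (1 + norm y) powr - real (N - 1) \<le> \<mu> y" and c: "0 < c"
    and N: "CARD('n) + 3 \<le> N" and A: "A \<subseteq> lattice"
  shows "\<bar>\<Sum>\<^sub>\<infinity>a\<in>A. partial \<mu> j (x - a)\<bar>
           \<le> K / (1/4) ^ N * (2 * 4 ^ CARD('n)) * ((1 + sqrt DIM(real^'n)) ^ (N - 1) / c) * muset \<mu> (lbdry A) x"
proof -
  obtain p where p: "p \<in> lattice" "infnorm (x - p) \<le> 1/2" using lattice_point_near by blast
  have "\<bar>\<Sum>\<^sub>\<infinity>a\<in>A. partial \<mu> j (x - a)\<bar>
      \<le> K / (1/4) ^ N * (2 * 4 ^ CARD('n)) * (\<Sum>\<^sub>\<infinity>e\<in>lbdry A. decay (N - 1) (e - p))"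
    by (rule abs_infsum_partial_le_boundary[OF diff pou decay K N A p])
  also have "\<dots> \<le> K / (1/4) ^ N * (2 * 4 ^ CARD('n)) * ((1 + sqrt DIM(real^'n)) ^ (N - 1) / c * muset \<mu> (lbdry A) x)"
    using infsum_decay_le_muset[OF lower c pou lbdry_subset_lattice[OF A] p] K N
    by (intro mult_left_mono) simp_all
  finally show ?thesis by (simp only: mult.assoc)
qed

lemma localized_onorm_bound:
  fixes \<mu> :: "real^'n \<Rightarrow> real"
  assumes "localized \<mu>"
  shows "\<exists>C\<ge>0. \<forall>x. x \<noteq> 0 \<longrightarrow> onorm (frechet_derivative \<mu> (at x)) \<le> C * norm x powr - real (10 * CARD('n) + 1)"
proof -
  obtain C where C: "\<forall>x. \<bar>\<mu> x\<bar> \<le> C \<and> (x \<noteq> 0 \<longrightarrow> \<bar>\<mu> x\<bar> \<le> C * norm x powr (- 10 * real CARD('n)))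
      \<and> (x \<noteq> 0 \<longrightarrow> onorm (frechet_derivative \<mu> (at x)) \<le> C * norm x powr (- 10 * real CARD('n) - 1))"
    using assms unfolding localized_def by blast
  moreover have "0 \<le> C" using conjunct1[OF spec[OF C, of 0]] abs_ge_zero[of "\<mu> 0"] by linarith
  moreover have "- 10 * real CARD('n) - 1 = - real (10 * CARD('n) + 1)" by simp
  ultimately show ?thesis by metis
qed

theorem lemma1p3:
  fixes \<mu> :: "real^'n \<Rightarrow> real"
  assumes pos: "\<And>x. \<mu> x > 0"
    and diff: "\<And>x. \<mu> differentiable (at x)"
    and loc: "localized \<mu>"
    and pou: "\<And>x. ((\<lambda>a. \<mu> (x - a)) has_sum 1) lattice"
    and lower: "\<exists>c>0. \<forall>x. \<mu> x \<ge> c * (1 + norm x) powr (- 10 * real CARD('n))"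
  shows "\<exists>C>0. \<forall>A \<subseteq> lattice. \<forall>j x. \<exists>D.
           ((\<lambda>t. muset \<mu> A (x + t *\<^sub>R axis j 1)) has_real_derivative D) (at 0) \<and>
           \<bar>D\<bar> \<le> C * muset \<mu> (lbdry A) x"
proof -
  let ?d = "CARD('n)"
  let ?N = "10 * ?d + 1"
  have "1 \<le> ?d" using finite_UNIV_card_ge_0[where 'a = 'n] by simp
  then have N: "?d + 3 \<le> ?N" by linarith
  obtain C0 where C0: "0 \<le> C0" "\<And>x. x \<noteq> 0 \<Longrightarrow> onorm (frechet_derivative \<mu> (at x)) \<le> C0 * norm x powr - real ?N"
    using localized_onorm_bound[OF loc] by blast
  obtain K where K: "0 < K" "\<And>j z. \<bar>partial \<mu> j z\<bar> \<le> K / (1 + norm z) ^ ?N"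
    using partial_decay[where C = C0 and N = ?N, OF diff pou C0(2,1)] N by fastforce
  have "- 10 * real ?d = - real (?N - 1)" by simp
  then obtain c where c: "0 < c" "\<And>x. c * (1 + norm x) powr - real (?N - 1) \<le> \<mu> x"
    using lower by auto
  define C where "C = K / (1/4) ^ ?N * (2 * 4 ^ ?d) * ((1 + sqrt DIM(real^'n)) ^ (?N - 1) / c)"
  have "0 < C" unfolding C_def using K(1) c(1)
    by (intro mult_pos_pos divide_pos_pos zero_less_power) (auto simp: add_pos_nonneg)
  moreover have "((\<lambda>t. muset \<mu> A (x + t *\<^sub>R axis j 1)) has_real_derivative
      (\<Sum>\<^sub>\<infinity>a\<in>A. partial \<mu> j (x - a))) (at 0)" if "A \<subseteq> lattice" for A j x
    using muset_has_real_derivative[OF diff pou K(2) _ _ that] K(1) N by simp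
  moreover have "\<bar>\<Sum>\<^sub>\<infinity>a\<in>A. partial \<mu> j (x - a)\<bar> \<le> C * muset \<mu> (lbdry A) x"
    if "A \<subseteq> lattice" for A j x
    unfolding C_def using abs_infsum_partial_le_muset_boundary[OF diff pou K(2) _ c(2,1) N that] K(1) by simp
  ultimately show ?thesis by blast
qed

end
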